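(* Let $m-n=1$, let $\gamma_1,\ldots,\gamma_m,\delta\in\mathbb R$ satisfy the conditions below, and suppose $\mathcal R=\{\mathbf u\in\mathbb R^m\colon\gamma_1u_1^2+\cdots+\gamma_mu_m^2=\delta\}$ is compact (so $\mathcal R\cong S^{m-1}$ and $N\cong S^{m-1}\times_{\mathbb Z_2}S^1$). Then the immersion $i\colon N\to\mathbb C^m$ is an embedding (of an $H$-minimal Lagrangian submanifold) if and only if $\gamma_1=\cdots=\gamma_m$. In this case the topological type of $N=N(m)$ depends only on the parity of $m$: $N(m)\cong S^{m-1}\times S^1$ if $m$ is even, and $N(m)\cong\mathcal K^m$ if $m$ is odd.
   Context: Conditions: $\delta\in\mathbb R_\ge\langle\gamma_1,\ldots,\gamma_m\rangle$; $\delta$ lies in no cone generated by fewer than one $\gamma_k$ (i.e. $\delta\ne0$ when expressed through an empty set); the $\gamma_k$ generate a lattice $L\cong\mathbb Z$. $L^*$ is the dual lattice, $T_\Gamma=\mathbb R/L^*$ acting on $\mathbb C^m$ by $\varphi\cdot\mathbf z=(e^{2\pi i\gamma_k\varphi}z_k)_k$, $D_\Gamma=\tfrac12L^*/L^*\cong\mathbb Z_2$, $N=\mathcal R\times_{D_\Gamma}T_\Gamma$ (quotient by the diagonal action), and $i[\mathbf u,\varphi]=\varphi\cdot\mathbf u$. $H$-minimal Lagrangian: the symplectic form of $\mathbb C^m$ restricts to zero and the first variation of volume along all compactly supported Hamiltonian vector fields vanishes. $\mathcal K^m$ denotes the $m$-dimensional Klein bottle, the mapping torus of an orientation-reversing isometry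 (e.g. a reflection) of $S^{m-1}$. *)

theory Defs
  imports "HOL-Analysis.Analysis"
begin

(* Quotient topology of X by a relation r (intended: an equivalence relation on topspace X). *)
definition eq_class :: "'a topology \<Rightarrow> ('a \<Rightarrow> 'a \<Rightarrow> bool) \<Rightarrow> 'a \<Rightarrow> 'a set" where
  "eq_class X r x = {y \<in> topspace X. r x y}"

definition quotient_topology :: "'a topology \<Rightarrow> ('a \<Rightarrow> 'a \<Rightarrow> bool) \<Rightarrow> 'a set topology" where
  "quotient_topology X r = topology (\<lambda>U. U \<subseteq> eq_class X r ` topspace X \<and>
      openin X {x \<in> topspace X. eq_class X r x \<in> U})"

definition mapping_torus :: "'a topology \<Rightarrow> ('a \<Rightarrow> 'a) \<Rightarrow> ('a \<times> real) set topology" where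
  "mapping_torus X f = quotient_topology (prod_topology X (top_of_set {0..1}))
     (\<lambda>(x,t) (y,s). (x,t) = (y,s) \<or> (t = 0 \<and> s = 1 \<and> y = f x) \<or> (t = 1 \<and> s = 0 \<and> x = f y))"

(* The m-dimensional Klein bottle K^m (m = CARD('m)): mapping torus of a reflection of S^{m-1}. *)
definition reflection_map :: "real^'m \<Rightarrow> real^'m" where
  "reflection_map x = (let a = axis (SOME k. True) 1 in x - (2 * (x \<bullet> a)) *\<^sub>R a)"

definition klein_bottle :: "((real^'m) \<times> real) set topology" where
  "klein_bottle = mapping_torus (top_of_set (sphere 0 1 :: (real^'m) set)) reflection_map"

(* Lattice L generated by gamma_1..gamma_m (here gamma_k \<in> \<real>, since m - n = 1) *)
definition gen_lattice :: "real^'m \<Rightarrow> real set" where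
  "gen_lattice \<gamma> = range (\<lambda>c::'m \<Rightarrow> int. \<Sum>k\<in>UNIV. of_int (c k) * \<gamma>$k)"

definition dual_lattice :: "real set \<Rightarrow> real set" where
  "dual_lattice L = {\<phi>. \<forall>g\<in>L. g * \<phi> \<in> \<int>}"

definition torus_act :: "real^'m \<Rightarrow> real \<Rightarrow> real^'m \<Rightarrow> complex^'m" where
  "torus_act \<gamma> \<phi> u = (\<chi> k. cis (2 * pi * \<gamma>$k * \<phi>) * complex_of_real (u$k))"

definition R_set :: "real^'m \<Rightarrow> real \<Rightarrow> (real^'m) set" where
  "R_set \<gamma> \<delta> = {u. (\<Sum>k\<in>UNIV. \<gamma>$k * (u$k)^2) = \<delta>}"

(* N = R \<times>_{D} T, realised as (R \<times> \<real>)/(\<frac>12 L^* ) with \<psi>\<cdot>(u,\<phi>) = (\<psi>\<cdot>u, \<phi>+\<psi>);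
   this is the quotient of R \<times> T_\<Gamma> (T_\<Gamma> = \<real>/L^* ) by the diagonal action of D_\<Gamma> = \<frac>12 L^*/L^* . *)
definition N_rel :: "real^'m \<Rightarrow> ((real^'m) \<times> real) \<Rightarrow> ((real^'m) \<times> real) \<Rightarrow> bool" where
  "N_rel \<gamma> = (\<lambda>(u,\<phi>) (u',\<phi>'). \<exists>\<psi>. 2 * \<psi> \<in> dual_lattice (gen_lattice \<gamma>) \<and>
       (\<chi> k. complex_of_real (u'$k)) = torus_act \<gamma> \<psi> u \<and> \<phi>' = \<phi> + \<psi>)"

definition N_top :: "real^'m \<Rightarrow> real \<Rightarrow> ((real^'m) \<times> real) set topology" where
  "N_top \<gamma> \<delta> = quotient_topology (prod_topology (top_of_set (R_set \<gamma> \<delta>)) euclideanreal) (N_rel \<gamma>)"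

definition N_imm :: "real^'m \<Rightarrow> ((real^'m) \<times> real) set \<Rightarrow> complex^'m" where
  "N_imm \<gamma> c = (let p = (SOME p. p \<in> c) in torus_act \<gamma> (snd p) (fst p))"

end

theory Submission
  imports Defs
begin

text \<open>Compactness of \<open>R\<close> forces every weight \<open>\<gamma>\<^sub>k\<close> to have the sign of \<open>\<delta>\<close>. If the weights are not
  all equal, some \<open>\<gamma>\<^sub>k\<close> is a multiple \<open>n g\<close> of the generator of \<open>L\<close> with \<open>|n| \<ge> 2\<close>; the half turn
  \<open>\<phi> = 1/(2\<gamma>\<^sub>k)\<close> carries \<open>r e\<^sub>k\<close> to \<open>-r e\<^sub>k\<close> although \<open>2\<phi> \<notin> L\<^sup>*\<close>, so \<open>i\<close> is not injective.
  If all weights equal \<open>a\<close>, then \<open>\<phi>\<cdot>u = \<phi>'\<cdot>u'\<close> forces \<open>\<phi>' = \<phi> + j/(2a)\<close> and \<open>u' = (-1)\<^sup>j u\<close>, which is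
  exactly the relation defining \<open>N\<close>; as \<open>N\<close> is compact, the continuous injection \<open>i\<close> is an embedding.
  Then \<open>R\<close> is a round sphere and \<open>N = (S\<^sup>m\<^sup>-\<^sup>1 \<times> \<real>)/((u, \<phi>) \<sim> (-u, \<phi> + 1/(2a)))\<close>. Pairing the
  coordinates into complex lines gives a circle of rotations whose half turn is \<open>-1\<close> for even \<open>m\<close>
  and minus the reflection in the unpaired axis for odd \<open>m\<close>: in the first case it untwists \<open>N\<close> into
  \<open>S\<^sup>m\<^sup>-\<^sup>1 \<times> S\<^sup>1\<close>, in the second \<open>N\<close> becomes the mapping torus of that reflection.\<close>

section \<open>Quotients by the fibres of a map\<close>

lemma istopology_quotient:
  "istopology (\<lambda>U. U \<subseteq> eq_class X r ` topspace X \<and> openin X {x \<in> topspace X. eq_class X r x \<in> U})"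
proof -
  have "{x \<in> topspace X. eq_class X r x \<in> S \<inter> T}
        = {x \<in> topspace X. eq_class X r x \<in> S} \<inter> {x \<in> topspace X. eq_class X r x \<in> T}" for S T
    by auto
  moreover have "{x \<in> topspace X. eq_class X r x \<in> \<Union>K} = (\<Union>S\<in>K. {x \<in> topspace X. eq_class X r x \<in> S})" for K
    by auto
  ultimately show ?thesis
    unfolding istopology_def by (auto intro!: openin_Int openin_Union)
qed

lemma openin_quotient_topology:
  "openin (quotient_topology X r) U \<longleftrightarrow>
     U \<subseteq> eq_class X r ` topspace X \<and> openin X {x \<in> topspace X. eq_class X r x \<in> U}"
  unfolding quotient_topology_def topology_inverse'[OF istopology_quotient] ..

lemma topspace_quotient_topology: "topspace (quotient_topology X r) = eq_class X r ` topspace X"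
proof -
  have "{x \<in> topspace X. eq_class X r x \<in> eq_class X r ` topspace X} = topspace X"
    by blast
  then have "openin (quotient_topology X r) (eq_class X r ` topspace X)"
    unfolding openin_quotient_topology by simp
  then show ?thesis
    using openin_subset openin_quotient_topology[of X r "topspace (quotient_topology X r)"] by blast
qed

lemma continuous_map_eq_class: "continuous_map X (quotient_topology X r) (eq_class X r)"
  unfolding continuous_map_def topspace_quotient_topology openin_quotient_topology by auto

definition quot_lift :: "('a \<Rightarrow> 'b) \<Rightarrow> 'a set \<Rightarrow> 'b" where
  "quot_lift g c = g (SOME p. p \<in> c)"

lemma quot_lift_eq_class:
  assumes "x \<in> topspace X" "r x x" "\<And>y. y \<in> topspace X \<Longrightarrow> r x y \<Longrightarrow> g y = g x"
  shows "quot_lift g (eq_class X r x) = g x"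
proof -
  have "x \<in> eq_class X r x" using assms by (simp add: eq_class_def)
  then have "(SOME p. p \<in> eq_class X r x) \<in> eq_class X r x" by (rule someI)
  then show ?thesis unfolding quot_lift_def using assms(3) by (simp add: eq_class_def)
qed

definition fibre_relation :: "'a topology \<Rightarrow> ('a \<Rightarrow> 'b) \<Rightarrow> ('a \<Rightarrow> 'a \<Rightarrow> bool) \<Rightarrow> bool" where
  "fibre_relation X g r \<longleftrightarrow> (\<forall>x\<in>topspace X. \<forall>y\<in>topspace X. r x y \<longleftrightarrow> g x = g y)"

lemma fibre_relationD:
  "fibre_relation X g r \<Longrightarrow> x \<in> topspace X \<Longrightarrow> y \<in> topspace X \<Longrightarrow> r x y \<longleftrightarrow> g x = g y"
  unfolding fibre_relation_def by blast

lemma eq_class_fibre: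
  "fibre_relation X g r \<Longrightarrow> x \<in> topspace X \<Longrightarrow> eq_class X r x = {y \<in> topspace X. g y = g x}"
  unfolding fibre_relation_def eq_class_def by auto

lemma quot_lift_eq_class_fibre:
  "fibre_relation X g r \<Longrightarrow> x \<in> topspace X \<Longrightarrow> quot_lift g (eq_class X r x) = g x"
  unfolding fibre_relation_def by (intro quot_lift_eq_class) auto

lemma image_quot_lift:
  "fibre_relation X g r \<Longrightarrow> quot_lift g ` topspace (quotient_topology X r) = g ` topspace X"
  unfolding topspace_quotient_topology image_image
  by (rule image_cong) (simp_all add: quot_lift_eq_class_fibre)

lemma continuous_map_quot_lift:
  assumes fibres: "fibre_relation X g r" and g: "continuous_map X Y g"
  shows "continuous_map (quotient_topology X r) Y (quot_lift g)"
  unfolding continuous_map_def topspace_quotient_topology openin_quotient_topology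
proof (intro conjI allI impI)
  note lift = quot_lift_eq_class_fibre[OF fibres]
  show "quot_lift g \<in> eq_class X r ` topspace X \<rightarrow> topspace Y"
    using lift continuous_map_funspace[OF g] by auto
  fix U assume "openin Y U"
  moreover have "{x \<in> topspace X. eq_class X r x \<in> {c \<in> eq_class X r ` topspace X. quot_lift g c \<in> U}}
        = {x \<in> topspace X. g x \<in> U}"
    using lift by auto
  ultimately show "openin X {x \<in> topspace X. eq_class X r x \<in> {c \<in> eq_class X r ` topspace X. quot_lift g c \<in> U}}"
    using openin_continuous_map_preimage[OF g] by simp
qed blast

lemma compact_space_quotient_topology:
  assumes fibres: "fibre_relation X g r"
    and S: "compactin X S" and cover: "\<And>x. x \<in> topspace X \<Longrightarrow> \<exists>y\<in>S. r y x"
  shows "compact_space (quotient_topology X r)"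
proof -
  have "eq_class X r x \<in> eq_class X r ` S" if x: "x \<in> topspace X" for x
  proof -
    obtain y where y: "y \<in> S" "r y x" using cover[OF x] by blast
    moreover have "y \<in> topspace X" using y compactin_subset_topspace[OF S] by blast
    ultimately have "g y = g x"
      using x fibres unfolding fibre_relation_def by blast
    then have "eq_class X r x = eq_class X r y"
      using x \<open>y \<in> topspace X\<close> by (simp add: eq_class_fibre[OF fibres])
    then show ?thesis using y by blast
  qed
  then have "eq_class X r ` S = topspace (quotient_topology X r)"
    using compactin_subset_topspace[OF S] unfolding topspace_quotient_topology by blast
  then show ?thesis
    using image_compactin[OF S continuous_map_eq_class, of r] by (simp add: compact_space_def)
qed

lemma embedding_map_quot_lift:
  assumes fibres: "fibre_relation X g r"
    and "compactin X S" "\<And>x. x \<in> topspace X \<Longrightarrow> \<exists>y\<in>S. r y x"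
    and "continuous_map X Y g" "Hausdorff_space Y"
  shows "embedding_map (quotient_topology X r) Y (quot_lift g)"
proof (rule continuous_imp_embedding_map)
  have "eq_class X r x = eq_class X r y"
    if "x \<in> topspace X" "y \<in> topspace X" "quot_lift g (eq_class X r x) = quot_lift g (eq_class X r y)" for x y
  proof -
    have "g x = g y" using that by (simp add: quot_lift_eq_class_fibre[OF fibres])
    then show ?thesis using that by (simp add: eq_class_fibre[OF fibres])
  qed
  then show "inj_on (quot_lift g) (topspace (quotient_topology X r))"
    unfolding topspace_quotient_topology inj_on_def by blast
  show "continuous_map (quotient_topology X r) Y (quot_lift g)"
    by (rule continuous_map_quot_lift[OF fibres assms(4)])
  show "compact_space (quotient_topology X r)"
    by (rule compact_space_quotient_topology[OF fibres assms(2,3)])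
qed fact

lemma quotient_homeomorphic_space_image:
  assumes fibres: "fibre_relation X g r"
    and "compactin X S" "\<And>x. x \<in> topspace X \<Longrightarrow> \<exists>y\<in>S. r y x"
    and "continuous_map X Y g" "Hausdorff_space Y"
  shows "quotient_topology X r homeomorphic_space subtopology Y (g ` topspace X)"
  using embedding_map_imp_homeomorphic_space[OF embedding_map_quot_lift[OF assms]] image_quot_lift[OF fibres]
  by simp

lemma quotient_homeomorphic_space:
  assumes fibres: "fibre_relation X g r"
    and "compactin X S" "\<And>x. x \<in> topspace X \<Longrightarrow> \<exists>y\<in>S. r y x"
    and "continuous_map X Y g" "Hausdorff_space Y" and onto: "g ` topspace X = topspace Y"
  shows "quotient_topology X r homeomorphic_space Y"
  using quotient_homeomorphic_space_image[OF fibres assms(2-5)] unfolding onto by simp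

section \<open>The quotient \<open>N\<close>, the map \<open>i\<close> and the signs of the weights\<close>

abbreviation N_cover :: "real^'m \<Rightarrow> real \<Rightarrow> ((real^'m) \<times> real) topology" where
  "N_cover \<gamma> \<delta> \<equiv> top_of_set (R_set \<gamma> \<delta> \<times> UNIV)"

lemma N_top_eq: "N_top \<gamma> \<delta> = quotient_topology (N_cover \<gamma> \<delta>) (N_rel \<gamma>)"
proof -
  have "prod_topology (top_of_set (R_set \<gamma> \<delta>)) euclideanreal = N_cover \<gamma> \<delta>"
    using subtopology_Times[of euclidean euclidean "R_set \<gamma> \<delta>" "UNIV :: real set"] by simp
  then show ?thesis unfolding N_top_def by (simp only:)
qed

lemma N_imm_eq_quot_lift: "N_imm \<gamma> = quot_lift (\<lambda>(u, \<phi>). torus_act \<gamma> \<phi> u)"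
  by (simp add: fun_eq_iff N_imm_def quot_lift_def split_beta Let_def)

lemma gen_lattice_component: "\<gamma>$k \<in> gen_lattice \<gamma>"
  unfolding gen_lattice_def
proof (rule range_eqI[of _ _ "\<lambda>j. if j = k then 1 else 0"])
  have "(\<Sum>j\<in>UNIV. of_int (if j = k then 1 else 0) * \<gamma>$j) = (\<Sum>j\<in>UNIV. if j = k then \<gamma>$k else 0)"
    by (rule sum.cong) auto
  then show "\<gamma>$k = (\<Sum>j\<in>UNIV. of_int (if j = k then 1 else 0) * \<gamma>$j)"
    by simp
qed

lemma N_rel_refl: "N_rel \<gamma> p p"
  by (cases p) (auto simp: N_rel_def dual_lattice_def torus_act_def intro!: exI[of _ 0])

lemma torus_act_N_rel:
  assumes "N_rel \<gamma> (u, \<phi>) (u', \<phi>')"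
  shows "torus_act \<gamma> \<phi>' u' = torus_act \<gamma> \<phi> u"
proof -
  obtain \<psi> where \<psi>: "2 * \<psi> \<in> dual_lattice (gen_lattice \<gamma>)" "\<phi>' = \<phi> + \<psi>"
    and u': "(\<chi> k. complex_of_real (u'$k)) = torus_act \<gamma> \<psi> u"
    using assms unfolding N_rel_def by auto
  show ?thesis unfolding vec_eq_iff
  proof
    fix k
    have "\<gamma>$k * (2 * \<psi>) \<in> \<int>"
      using \<psi>(1) gen_lattice_component[of \<gamma> k] unfolding dual_lattice_def by blast
    then have period: "cis (2 * pi * (\<gamma>$k * (2 * \<psi>))) = 1" by (rule cis_multiple_2pi)
    have "complex_of_real (u'$k) = cis (2 * pi * \<gamma>$k * \<psi>) * complex_of_real (u$k)"
      using arg_cong[OF u', of "\<lambda>v. v$k"] by (simp add: torus_act_def)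
    then have "torus_act \<gamma> \<phi>' u' $ k
        = cis (2 * pi * \<gamma>$k * \<phi>) * cis (2 * pi * (\<gamma>$k * (2 * \<psi>))) * complex_of_real (u$k)"
      unfolding torus_act_def \<psi>(2) by (simp add: cis_mult algebra_simps)
    then show "torus_act \<gamma> \<phi>' u' $ k = torus_act \<gamma> \<phi> u $ k"
      unfolding period by (simp add: torus_act_def)
  qed
qed

lemma N_imm_eq_class:
  assumes "u \<in> R_set \<gamma> \<delta>"
  shows "N_imm \<gamma> (eq_class (N_cover \<gamma> \<delta>) (N_rel \<gamma>) (u, \<phi>)) = torus_act \<gamma> \<phi> u"
proof -
  have "quot_lift (\<lambda>(u, \<phi>). torus_act \<gamma> \<phi> u) (eq_class (N_cover \<gamma> \<delta>) (N_rel \<gamma>) (u, \<phi>))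
      = (\<lambda>(u, \<phi>). torus_act \<gamma> \<phi> u) (u, \<phi>)"
    using assms N_rel_refl torus_act_N_rel by (intro quot_lift_eq_class) auto
  then show ?thesis unfolding N_imm_eq_quot_lift by simp
qed

lemma sum_axis_weighted_square:
  fixes \<gamma> :: "real^'m" shows "(\<Sum>i\<in>UNIV. \<gamma>$i * (axis k t $ i)^2) = \<gamma>$k * t^2"
proof -
  have "(\<Sum>i\<in>UNIV. \<gamma>$i * (axis k t $ i)^2) = (\<Sum>i\<in>UNIV. if i = k then \<gamma>$k * t^2 else 0)"
    by (rule sum.cong) (auto simp: axis_def)
  then show ?thesis by simp
qed

lemma R_set_unbounded:
  assumes j: "\<gamma>$j * \<delta> > 0" and k: "\<gamma>$k * \<delta> \<le> 0"
  shows "\<not> bounded (R_set \<gamma> \<delta>)"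
proof
  assume "bounded (R_set \<gamma> \<delta>)"
  then obtain B where B: "\<And>u. u \<in> R_set \<gamma> \<delta> \<Longrightarrow> norm u \<le> B" by (meson bounded_iff)
  have kj: "k \<noteq> j" using j k by auto
  define t where "t = \<bar>B\<bar> + 1"
  define s where "s = sqrt ((\<delta> - \<gamma>$k * t^2) / \<gamma>$j)"
  \<comment> \<open>The point \<open>t e\<^sub>k + s e\<^sub>j\<close> lies on \<open>R\<close> but outside the ball of radius \<open>B\<close>.\<close>
  have "(\<delta> - \<gamma>$k * t^2) * \<delta> = \<delta> * \<delta> + (- (\<gamma>$k * \<delta>)) * t^2"
    by (simp add: algebra_simps)
  also have "\<dots> \<ge> 0"
    using k by (intro add_nonneg_nonneg) (simp_all add: mult_nonpos_nonneg)
  finally have "((\<delta> - \<gamma>$k * t^2) * \<delta>) / (\<gamma>$j * \<delta>) \<ge> 0"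
    using j by (rule divide_nonneg_pos)
  moreover have "\<delta> \<noteq> 0" using j by auto
  ultimately have "(\<delta> - \<gamma>$k * t^2) / \<gamma>$j \<ge> 0"
    by simp
  then have "s^2 = (\<delta> - \<gamma>$k * t^2) / \<gamma>$j"
    unfolding s_def by simp
  moreover have "\<gamma>$j \<noteq> 0" using j by auto
  ultimately have "\<gamma>$j * s^2 = \<delta> - \<gamma>$k * t^2"
    by simp
  moreover have "(\<Sum>i\<in>UNIV. \<gamma>$i * ((axis k t + axis j s) $ i)^2)
      = (\<Sum>i\<in>UNIV. \<gamma>$i * (axis k t $ i)^2 + \<gamma>$i * (axis j s $ i)^2)"
    using kj by (intro sum.cong) (auto simp: axis_def)
  then have "(\<Sum>i\<in>UNIV. \<gamma>$i * ((axis k t + axis j s) $ i)^2) = \<gamma>$k * t^2 + \<gamma>$j * s^2"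
    by (simp add: sum.distrib sum_axis_weighted_square)
  ultimately have "axis k t + axis j s \<in> R_set \<gamma> \<delta>" by (simp add: R_set_def)
  then have "\<bar>(axis k t + axis j s) $ k\<bar> \<le> B"
    using B component_le_norm_cart order_trans by blast
  then show False using kj unfolding t_def by (simp add: axis_def)
qed

lemma coeff_mult_delta_pos:
  fixes \<gamma> :: "real^'m"
  assumes cone: "\<exists>c::'m \<Rightarrow> real. (\<forall>k. c k \<ge> 0) \<and> \<delta> = (\<Sum>k\<in>UNIV. c k * \<gamma>$k)"
    and nondeg: "\<delta> \<noteq> 0" and cpt: "compact (R_set \<gamma> \<delta>)"
  shows "\<gamma>$k * \<delta> > 0"
proof -
  obtain c :: "'m \<Rightarrow> real" where c: "\<forall>k. c k \<ge> 0" "\<delta> = (\<Sum>k\<in>UNIV. c k * \<gamma>$k)"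
    using cone by blast
  have "\<exists>j. \<gamma>$j * \<delta> > 0"
  proof (rule ccontr)
    assume "\<nexists>j. \<gamma>$j * \<delta> > 0"
    then have "(\<Sum>k\<in>UNIV. c k * (\<gamma>$k * \<delta>)) \<le> 0"
      using c(1) by (intro sum_nonpos) (simp add: mult_nonneg_nonpos not_less)
    moreover have "(\<Sum>k\<in>UNIV. c k * (\<gamma>$k * \<delta>)) = (\<Sum>k\<in>UNIV. c k * \<gamma>$k) * \<delta>"
      by (simp add: sum_distrib_right mult.assoc)
    ultimately have "\<delta> * \<delta> \<le> 0" by (simp only: c(2)[symmetric])
    then show False using nondeg not_real_square_gt_zero by (metis not_less)
  qed
  then show ?thesis using R_set_unbounded compact_imp_bounded[OF cpt] not_less by blast
qed

section \<open>Unequal weights: \<open>i\<close> is not injective\<close>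

lemma nonconstant_coeff_large_multiple:
  fixes \<gamma> :: "real^'m"
  assumes lattice: "gen_lattice \<gamma> = range (\<lambda>j::int. of_int j * g)"
    and pos: "\<And>k. \<gamma>$k * \<delta> > 0" and nonconst: "\<not> (\<forall>k l. \<gamma>$k = \<gamma>$l)"
  obtains k n where "\<gamma>$k = of_int n * g" "\<bar>n\<bar> \<ge> 2"
proof -
  have "\<forall>k. \<exists>n::int. \<gamma>$k = of_int n * g"
    using gen_lattice_component[of \<gamma>] unfolding lattice by blast
  then obtain n :: "'m \<Rightarrow> int" where n: "\<And>k. \<gamma>$k = of_int (n k) * g" by metis
  show ?thesis
  proof (rule ccontr)
    assume "\<not> thesis"
    have unit: "n k = 1 \<or> n k = -1" for k
    proof -
      have "\<bar>n k\<bar> \<le> 1" using that[OF n[of k]] \<open>\<not> thesis\<close> by (cases "2 \<le> \<bar>n k\<bar>") auto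
      moreover have "n k \<noteq> 0" using pos[of k] n[of k] by auto
      ultimately show ?thesis by arith
    qed
    have "\<gamma>$k = \<gamma>$l" for k l
    proof -
      have "of_int (n k) * (g * \<delta>) > 0" "of_int (n l) * (g * \<delta>) > 0"
        using pos[of k] pos[of l] n[of k] n[of l] by (simp_all add: mult.assoc)
      then have "n k = n l" using unit[of k] unit[of l] by auto
      then show ?thesis using n by simp
    qed
    then show False using nonconst by blast
  qed
qed

lemma N_imm_not_inj_on:
  fixes \<gamma> :: "real^'m"
  assumes lattice: "gen_lattice \<gamma> = range (\<lambda>j::int. of_int j * g)"
    and k: "\<gamma>$k = of_int n * g" "\<bar>n\<bar> \<ge> 2" and pos: "\<gamma>$k * \<delta> > 0"
  shows "\<not> inj_on (N_imm \<gamma>) (topspace (N_top \<gamma> \<delta>))"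
proof
  assume inj: "inj_on (N_imm \<gamma>) (topspace (N_top \<gamma> \<delta>))"
  have gk: "\<gamma>$k \<noteq> 0" using pos by auto
  define r where "r = sqrt (\<delta> / \<gamma>$k)"
  have "\<delta> / \<gamma>$k > 0" using pos by (auto simp: zero_less_divide_iff zero_less_mult_iff)
  then have r2: "\<gamma>$k * r^2 = \<delta>" unfolding r_def using gk by simp
  define p1 where "p1 = (axis k r, 1 / (2 * \<gamma>$k))"
  define p2 where "p2 = (axis k (-r), 0::real)"
  have R: "p1 \<in> R_set \<gamma> \<delta> \<times> UNIV" "p2 \<in> R_set \<gamma> \<delta> \<times> UNIV"
    unfolding p1_def p2_def R_set_def by (simp_all add: sum_axis_weighted_square r2)
  have "cis (2 * pi * \<gamma>$k * (1 / (2 * \<gamma>$k))) = -1" using gk by simp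
  then have same_image: "torus_act \<gamma> (1 / (2 * \<gamma>$k)) (axis k r) = torus_act \<gamma> 0 (axis k (-r))"
    unfolding vec_eq_iff torus_act_def by (auto simp: axis_def)
  have "\<not> N_rel \<gamma> p1 p2"
  proof
    assume "N_rel \<gamma> p1 p2"
    then obtain \<psi> where \<psi>: "2 * \<psi> \<in> dual_lattice (gen_lattice \<gamma>)" "0 = 1 / (2 * \<gamma>$k) + \<psi>"
      unfolding N_rel_def p1_def p2_def by auto
    have "g \<in> gen_lattice \<gamma>" unfolding lattice by (rule range_eqI[of _ _ 1]) simp
    then have "g * (2 * \<psi>) \<in> \<int>" using \<psi>(1) unfolding dual_lattice_def by blast
    moreover have "g * (2 * \<psi>) = - 1 / of_int n" using \<psi>(2) k(1) gk by (simp add: field_simps)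
    moreover have "\<bar>1 / of_int n\<bar> < (1::real)" using k(2) by (simp add: abs_div)
    ultimately show False using Ints_nonzero_abs_ge1[of "g * (2 * \<psi>)"] k(2) by fastforce
  qed
  then have "p2 \<notin> eq_class (N_cover \<gamma> \<delta>) (N_rel \<gamma>) p1"
    unfolding eq_class_def by blast
  moreover have "p2 \<in> eq_class (N_cover \<gamma> \<delta>) (N_rel \<gamma>) p2"
    using R(2) N_rel_refl unfolding eq_class_def by auto
  moreover have "eq_class (N_cover \<gamma> \<delta>) (N_rel \<gamma>) p1 = eq_class (N_cover \<gamma> \<delta>) (N_rel \<gamma>) p2"
  proof (rule inj_onD[OF inj])
    show "N_imm \<gamma> (eq_class (N_cover \<gamma> \<delta>) (N_rel \<gamma>) p1) = N_imm \<gamma> (eq_class (N_cover \<gamma> \<delta>) (N_rel \<gamma>) p2)"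
      using R same_image unfolding p1_def p2_def by (simp add: N_imm_eq_class)
  qed (use R in \<open>auto simp: N_top_eq topspace_quotient_topology\<close>)
  ultimately show False by blast
qed

section \<open>Equal weights: \<open>i\<close> is an embedding\<close>

lemma cis_pi_int: "cis (pi * of_int j) = (if even j then 1 else -1)"
  by (simp add: complex_eq_iff)

lemma dual_lattice_const:
  fixes \<gamma> :: "real^'m"
  assumes const: "\<forall>k. \<gamma>$k = a"
  shows "x \<in> dual_lattice (gen_lattice \<gamma>) \<longleftrightarrow> a * x \<in> \<int>"
proof
  assume "x \<in> dual_lattice (gen_lattice \<gamma>)"
  then show "a * x \<in> \<int>"
    using gen_lattice_component[of \<gamma>] const unfolding dual_lattice_def by auto
next
  assume ax: "a * x \<in> \<int>"
  have "l * x \<in> \<int>" if l: "l \<in> gen_lattice \<gamma>" for l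
  proof -
    obtain c :: "'m \<Rightarrow> int" where "l = (\<Sum>k\<in>UNIV. of_int (c k) * \<gamma>$k)"
      using l unfolding gen_lattice_def by blast
    then have "l * x = of_int (\<Sum>k\<in>UNIV. c k) * (a * x)"
      using const by (simp add: sum_distrib_right mult.assoc)
    then show ?thesis using Ints_mult[OF Ints_of_int ax] by (simp only:)
  qed
  then show "x \<in> dual_lattice (gen_lattice \<gamma>)" unfolding dual_lattice_def by blast
qed

lemma torus_act_const_nth:
  "\<forall>k. \<gamma>$k = a \<Longrightarrow> torus_act \<gamma> \<phi> u $ k = cis (2 * pi * a * \<phi>) * complex_of_real (u$k)"
  by (simp add: torus_act_def)

lemma N_rel_const:
  fixes \<gamma> :: "real^'m"
  assumes const: "\<forall>k. \<gamma>$k = a" and a: "a \<noteq> 0"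
  shows "N_rel \<gamma> (u, \<phi>) (u', \<phi>') \<longleftrightarrow>
           (\<exists>j::int. \<phi>' = \<phi> + of_int j / (2 * a) \<and> u' = (if even j then u else - u))"
proof -
  have turn: "(\<chi> k. complex_of_real (u'$k)) = torus_act \<gamma> (of_int j / (2 * a)) u
      \<longleftrightarrow> u' = (if even j then u else - u)" for j :: int
  proof -
    have "2 * pi * a * (of_int j / (2 * a)) = pi * of_int j" using a by simp
    then show ?thesis
      unfolding vec_eq_iff using const by (auto simp: torus_act_def cis_pi_int)
  qed
  have "N_rel \<gamma> (u, \<phi>) (u', \<phi>') \<longleftrightarrow> (\<exists>\<psi>. a * (2 * \<psi>) \<in> \<int> \<and>
      (\<chi> k. complex_of_real (u'$k)) = torus_act \<gamma> \<psi> u \<and> \<phi>' = \<phi> + \<psi>)"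
    unfolding N_rel_def dual_lattice_const[OF const] by simp
  also have "\<dots> \<longleftrightarrow> (\<exists>j::int. (\<chi> k. complex_of_real (u'$k)) = torus_act \<gamma> (of_int j / (2 * a)) u
      \<and> \<phi>' = \<phi> + of_int j / (2 * a))"
  proof
    assume "\<exists>\<psi>. a * (2 * \<psi>) \<in> \<int> \<and> (\<chi> k. complex_of_real (u'$k)) = torus_act \<gamma> \<psi> u \<and> \<phi>' = \<phi> + \<psi>"
    then obtain \<psi> j where "a * (2 * \<psi>) = of_int j"
        "(\<chi> k. complex_of_real (u'$k)) = torus_act \<gamma> \<psi> u" "\<phi>' = \<phi> + \<psi>"
      by (auto elim: Ints_cases)
    moreover have "\<psi> = of_int j / (2 * a)" using calculation(1) a by (simp add: field_simps)
    ultimately show "\<exists>j::int. (\<chi> k. complex_of_real (u'$k)) = torus_act \<gamma> (of_int j / (2 * a)) u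
      \<and> \<phi>' = \<phi> + of_int j / (2 * a)" by blast
  qed (use a in auto)
  finally show ?thesis unfolding turn by blast
qed

lemma torus_act_eq_iff_N_rel_const:
  fixes \<gamma> :: "real^'m"
  assumes const: "\<forall>k. \<gamma>$k = a" and a: "a \<noteq> 0" and u: "u \<noteq> 0"
  shows "torus_act \<gamma> \<phi> u = torus_act \<gamma> \<phi>' u' \<longleftrightarrow> N_rel \<gamma> (u, \<phi>) (u', \<phi>')"
proof
  assume eq: "torus_act \<gamma> \<phi> u = torus_act \<gamma> \<phi>' u'"
  define \<theta> where "\<theta> = 2 * pi * a * \<phi> - 2 * pi * a * \<phi>'"
  have rotated: "complex_of_real (u'$i) = cis \<theta> * complex_of_real (u$i)" for i
  proof -
    have "cis (2 * pi * a * \<phi>) * complex_of_real (u$i) = cis (2 * pi * a * \<phi>') * complex_of_real (u'$i)"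
      using arg_cong[OF eq, of "\<lambda>v. v$i"] by (simp add: torus_act_const_nth[OF const])
    then have "cis (- (2 * pi * a * \<phi>')) * (cis (2 * pi * a * \<phi>) * complex_of_real (u$i))
        = complex_of_real (u'$i)"
      by (simp add: cis_mult)
    then show ?thesis unfolding \<theta>_def by (simp add: cis_mult mult.assoc[symmetric])
  qed
  \<comment> \<open>A nonzero real vector can only be rotated to a real vector by a multiple of \<open>\<pi>\<close>.\<close>
  obtain i where "u$i \<noteq> 0" using u by (auto simp: vec_eq_iff)
  moreover have "sin \<theta> * u$i = 0" using arg_cong[OF rotated[of i], of Im] by simp
  ultimately obtain m :: int where m: "\<theta> = pi * of_int m"
    using sin_zero_iff_int2[of \<theta>] by (auto simp: mult.commute)
  have "pi * (2 * a * (\<phi> - \<phi>')) = pi * of_int m"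
    using m unfolding \<theta>_def by (simp add: algebra_simps)
  then have "2 * a * (\<phi> - \<phi>') = of_int m"
    by simp
  then have "\<phi>' = \<phi> + of_int (- m) / (2 * a)"
    using a by (simp add: field_simps)
  moreover have "u' = (if even (- m) then u else - u)"
    using rotated unfolding m cis_pi_int by (auto simp: vec_eq_iff)
  ultimately show "N_rel \<gamma> (u, \<phi>) (u', \<phi>')" unfolding N_rel_const[OF const a] by blast
next
  assume "N_rel \<gamma> (u, \<phi>) (u', \<phi>')"
  then show "torus_act \<gamma> \<phi> u = torus_act \<gamma> \<phi>' u'" by (rule torus_act_N_rel[symmetric])
qed

lemma N_cover_fundamental_domain:
  fixes \<gamma> :: "real^'m"
  assumes const: "\<forall>k. \<gamma>$k = a" and a: "a \<noteq> 0" and p: "p \<in> R_set \<gamma> \<delta> \<times> UNIV"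
  shows "\<exists>q \<in> R_set \<gamma> \<delta> \<times> cball 0 (1 / \<bar>a\<bar>). N_rel \<gamma> q p"
proof -
  obtain u \<phi> where up: "p = (u, \<phi>)" by fastforce
  define j where "j = \<lfloor>a * \<phi>\<rfloor>"
  define \<phi>' where "\<phi>' = \<phi> - of_int j / a"
  have "N_rel \<gamma> (u, \<phi>') (u, \<phi>)"
    unfolding N_rel_const[OF const a] \<phi>'_def using a by (intro exI[of _ "2 * j"]) auto
  moreover have "a * \<phi>' = a * \<phi> - of_int j" unfolding \<phi>'_def using a by (simp add: field_simps)
  then have "\<bar>a\<bar> * \<bar>\<phi>'\<bar> \<le> 1" unfolding j_def abs_mult[symmetric] by linarith
  then have "\<bar>\<phi>'\<bar> \<le> 1 / \<bar>a\<bar>" using a by (simp add: field_simps)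
  ultimately show ?thesis
    using p up by (intro bexI[of _ "(u, \<phi>')"]) (auto simp: dist_real_def)
qed

lemma compactin_N_cover:
  "compact (R_set \<gamma> \<delta>) \<Longrightarrow> compactin (N_cover \<gamma> \<delta>) (R_set \<gamma> \<delta> \<times> cball 0 c)"
  by (auto simp: compactin_subtopology intro: compact_Times)

lemma fibre_relation_N_rel_const:
  fixes \<gamma> :: "real^'m"
  assumes const: "\<forall>k. \<gamma>$k = a" and a: "a \<noteq> 0" and nondeg: "\<delta> \<noteq> 0"
  shows "fibre_relation (N_cover \<gamma> \<delta>) (\<lambda>(u, \<phi>). torus_act \<gamma> \<phi> u) (N_rel \<gamma>)"
proof -
  have "u \<noteq> 0" if "u \<in> R_set \<gamma> \<delta>" for u using that nondeg by (auto simp: R_set_def)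
  then show ?thesis
    unfolding fibre_relation_def by (auto simp: torus_act_eq_iff_N_rel_const[OF const a])
qed

lemma continuous_map_torus_act:
  "continuous_map (N_cover \<gamma> \<delta>) euclidean (\<lambda>(u, \<phi>). torus_act \<gamma> \<phi> u)"
  unfolding continuous_map_iff_continuous torus_act_def split_beta by (intro continuous_intros)

lemma embedding_map_N_imm_const:
  fixes \<gamma> :: "real^'m"
  assumes const: "\<forall>k. \<gamma>$k = a" and a: "a \<noteq> 0" and nondeg: "\<delta> \<noteq> 0"
    and cpt: "compact (R_set \<gamma> \<delta>)"
  shows "embedding_map (N_top \<gamma> \<delta>) (euclidean :: (complex^'m) topology) (N_imm \<gamma>)"
  unfolding N_top_eq N_imm_eq_quot_lift
  using fibre_relation_N_rel_const[OF const a nondeg] compactin_N_cover[OF cpt]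
    N_cover_fundamental_domain[OF const a] continuous_map_torus_act Hausdorff_space_euclidean
  by (rule embedding_map_quot_lift) auto

lemma N_top_homeomorphic_torus_image:
  fixes \<gamma> :: "real^'m"
  assumes const: "\<forall>k. \<gamma>$k = a" and a: "a \<noteq> 0" and nondeg: "\<delta> \<noteq> 0"
    and cpt: "compact (R_set \<gamma> \<delta>)"
  shows "N_top \<gamma> \<delta> homeomorphic_space
           subtopology euclidean ((\<lambda>(u, \<phi>). torus_act \<gamma> \<phi> u) ` (R_set \<gamma> \<delta> \<times> UNIV))"
proof -
  have "quotient_topology (N_cover \<gamma> \<delta>) (N_rel \<gamma>) homeomorphic_space
      subtopology euclidean ((\<lambda>(u, \<phi>). torus_act \<gamma> \<phi> u) ` topspace (N_cover \<gamma> \<delta>))"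
    by (rule quotient_homeomorphic_space_image[OF fibre_relation_N_rel_const[OF const a nondeg]
          compactin_N_cover[OF cpt] _ continuous_map_torus_act Hausdorff_space_euclidean])
      (use N_cover_fundamental_domain[OF const a] in auto)
  then show ?thesis unfolding N_top_eq by simp
qed

section \<open>Rotations of paired coordinates\<close>

text \<open>A pairing of the coordinates: \<open>\<sigma>\<close> is an involution swapping paired coordinates, and the sign
  \<open>s\<close> distinguishes the two members of a pair (\<open>s i = 0\<close> marks an unpaired coordinate). It is a
  complex structure on the paired coordinates, whose circle action is \<open>pair_rotation\<close>.\<close>
definition pairing :: "('m \<Rightarrow> 'm) \<Rightarrow> ('m \<Rightarrow> real) \<Rightarrow> bool" where
  "pairing \<sigma> s \<longleftrightarrow> (\<forall>i. \<sigma> (\<sigma> i) = i) \<and> (\<forall>i. s (\<sigma> i) = - s i) \<and> (\<forall>i. s i \<in> {-1, 0, 1})"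

definition pair_rotation :: "('m \<Rightarrow> 'm) \<Rightarrow> ('m \<Rightarrow> real) \<Rightarrow> real \<Rightarrow> real^'m \<Rightarrow> real^'m" where
  "pair_rotation \<sigma> s \<theta> x = (\<chi> i. (1 - (s i)^2 * (1 - cos \<theta>)) * x$i + sin \<theta> * s i * x$(\<sigma> i))"

lemma pair_rotation_nth:
  "pair_rotation \<sigma> s \<theta> x $ i = (1 - (s i)^2 * (1 - cos \<theta>)) * x$i + sin \<theta> * s i * x$(\<sigma> i)"
  by (simp add: pair_rotation_def)

lemma pair_rotation_add:
  assumes "pairing \<sigma> s"
  shows "pair_rotation \<sigma> s (\<theta> + \<eta>) x = pair_rotation \<sigma> s \<theta> (pair_rotation \<sigma> s \<eta> x)"
  unfolding vec_eq_iff
proof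
  fix i
  have "\<sigma> (\<sigma> i) = i" "s (\<sigma> i) = - s i" "s i \<in> {-1, 0, 1}"
    using assms unfolding pairing_def by auto
  then show "pair_rotation \<sigma> s (\<theta> + \<eta>) x $ i = pair_rotation \<sigma> s \<theta> (pair_rotation \<sigma> s \<eta> x) $ i"
    by (auto simp: pair_rotation_nth cos_add sin_add algebra_simps)
qed

lemma pair_rotation_pi_int:
  assumes "pairing \<sigma> s"
  shows "pair_rotation \<sigma> s (pi * of_int j) x = (\<chi> i. if s i = 0 \<or> even j then x$i else - x$i)"
  unfolding vec_eq_iff
proof
  fix i
  have "s i \<in> {-1, 0, 1}" using assms unfolding pairing_def by auto
  then show "pair_rotation \<sigma> s (pi * of_int j) x $ i = (\<chi> i. if s i = 0 \<or> even j then x$i else - x$i) $ i"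
    by (auto simp: pair_rotation_nth)
qed

lemma pair_rotation_zero: "pairing \<sigma> s \<Longrightarrow> pair_rotation \<sigma> s 0 x = x"
  using pair_rotation_pi_int[of \<sigma> s 0 x] by (simp add: vec_eq_iff)

lemma pair_rotation_inverse:
  "pairing \<sigma> s \<Longrightarrow> pair_rotation \<sigma> s (- \<theta>) (pair_rotation \<sigma> s \<theta> x) = x"
  using pair_rotation_add[of \<sigma> s "- \<theta>" \<theta> x] pair_rotation_zero[of \<sigma> s x] by simp

lemma pair_rotation_scaleR: "pair_rotation \<sigma> s \<theta> (c *\<^sub>R x) = c *\<^sub>R pair_rotation \<sigma> s \<theta> x"
  unfolding vec_eq_iff by (simp add: pair_rotation_nth algebra_simps)

lemma pair_rotation_uminus: "pair_rotation \<sigma> s \<theta> (- x) = - pair_rotation \<sigma> s \<theta> x"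
  using pair_rotation_scaleR[of \<sigma> s \<theta> "-1" x] by simp

lemma continuous_on_pair_rotation [continuous_intros]:
  fixes S :: "'a::t2_space set"
  shows "continuous_on S f \<Longrightarrow> continuous_on S g \<Longrightarrow> continuous_on S (\<lambda>p. pair_rotation \<sigma> s (f p) (g p))"
  unfolding pair_rotation_def by (intro continuous_intros)

lemma sum_involution_reindex:
  fixes f :: "'m::finite \<Rightarrow> 'a::comm_monoid_add"
  assumes "\<forall>i. \<sigma> (\<sigma> i) = i"
  shows "(\<Sum>i\<in>UNIV. f (\<sigma> i)) = (\<Sum>i\<in>UNIV. f i)"
  by (rule sum.reindex_bij_witness[where i = \<sigma> and j = \<sigma>]) (use assms in auto)

lemma norm_eq_sqrt_sum_squares: "norm x = sqrt (\<Sum>i\<in>UNIV. (x$i)^2)"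
  by (simp add: norm_vec_def L2_set_def)

lemma norm_pair_rotation:
  assumes "pairing \<sigma> s"
  shows "norm (pair_rotation \<sigma> s \<theta> x) = norm x"
proof -
  have \<sigma>: "\<forall>i. \<sigma> (\<sigma> i) = i" and s: "\<And>i. s (\<sigma> i) = - s i" and sv: "\<And>i. s i \<in> {-1, 0, 1}"
    using assms unfolding pairing_def by auto
  define c where "c i = 1 - (s i)^2 * (1 - cos \<theta>)" for i
  have square: "(pair_rotation \<sigma> s \<theta> x $ i)^2 = (c i)^2 * (x$i)^2 + (sin \<theta>)^2 * ((s i)^2 * (x$(\<sigma> i))^2)
      + 2 * cos \<theta> * sin \<theta> * (s i * x$i * x$(\<sigma> i))" for i
    using sv[of i] by (auto simp: pair_rotation_nth c_def power2_eq_square algebra_simps)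
  \<comment> \<open>The cross terms cancel in pairs, and the remaining terms are permuted by \<open>\<sigma>\<close>.\<close>
  have "(\<Sum>i\<in>UNIV. s i * x$i * x$(\<sigma> i)) = - (\<Sum>i\<in>UNIV. s i * x$i * x$(\<sigma> i))"
    using sum_involution_reindex[OF \<sigma>, of "\<lambda>i. s i * x$i * x$(\<sigma> i)"]
    by (simp add: \<sigma> s sum_negf algebra_simps)
  then have cross: "(\<Sum>i\<in>UNIV. s i * x$i * x$(\<sigma> i)) = 0" by simp
  have swap: "(\<Sum>i\<in>UNIV. (s i)^2 * (x$(\<sigma> i))^2) = (\<Sum>i\<in>UNIV. (s i)^2 * (x$i)^2)"
    using sum_involution_reindex[OF \<sigma>, of "\<lambda>i. (s i)^2 * (x$i)^2"] by (simp add: s)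
  have unit: "(c i)^2 + (sin \<theta>)^2 * (s i)^2 = 1" for i
    using sv[of i] sin_cos_squared_add[of \<theta>] by (auto simp: c_def power2_eq_square algebra_simps)
  have "(\<Sum>i\<in>UNIV. (pair_rotation \<sigma> s \<theta> x $ i)^2)
      = (\<Sum>i\<in>UNIV. (c i)^2 * (x$i)^2) + (sin \<theta>)^2 * (\<Sum>i\<in>UNIV. (s i)^2 * (x$(\<sigma> i))^2)
        + 2 * cos \<theta> * sin \<theta> * (\<Sum>i\<in>UNIV. s i * x$i * x$(\<sigma> i))"
    unfolding square by (simp add: sum.distrib sum_distrib_left)
  also have "\<dots> = (\<Sum>i\<in>UNIV. ((c i)^2 + (sin \<theta>)^2 * (s i)^2) * (x$i)^2)"
    unfolding cross swap by (simp add: sum.distrib sum_distrib_left algebra_simps)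
  also have "\<dots> = (\<Sum>i\<in>UNIV. (x$i)^2)" unfolding unit by simp
  finally show ?thesis unfolding norm_eq_sqrt_sum_squares by simp
qed

lemma pairing_exists:
  fixes k0 :: "'m::finite"
  obtains \<sigma> and s :: "'m \<Rightarrow> real" where "pairing \<sigma> s" "\<And>i. s i = 0 \<longleftrightarrow> odd CARD('m) \<and> i = k0"
proof -
  define m where "m = CARD('m)"
  have "m \<ge> 1" unfolding m_def by (simp add: Suc_le_eq)
  obtain e0 where e0: "bij_betw e0 (UNIV :: 'm set) {0..<m}"
    using ex_bij_betw_finite_nat[of "UNIV :: 'm set"] unfolding m_def by auto
  define e where "e = Transposition.transpose (e0 k0) (m - 1) \<circ> e0"
  have "bij_betw (Transposition.transpose (e0 k0) (m - 1)) {0..<m} {0..<m}"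
    by (rule bij_betw_transpose_iff) (use e0 \<open>m \<ge> 1\<close> in \<open>auto simp: bij_betw_def\<close>)
  then have e: "bij_betw e UNIV {0..<m}" unfolding e_def using e0 by (rule bij_betw_trans[rotated])
  have e_k0: "e k0 = m - 1" unfolding e_def by simp
  define d where "d = inv_into UNIV e"
  have de: "d (e i) = i" for i
    unfolding d_def using e by (simp add: bij_betw_def inv_into_f_f)
  have ed: "n < m \<Longrightarrow> e (d n) = n" for n
    unfolding d_def using e by (simp add: bij_betw_inv_into_right)
  have e_lt: "e i < m" for i using e by (auto simp: bij_betw_def)
  \<comment> \<open>Pair \<open>2l\<close> with \<open>2l + 1\<close>; for odd \<open>m\<close> the last index \<open>m - 1 = e k0\<close> stays unpaired.\<close>
  define partner where "partner n = (if even n then (if n + 1 < m then n + 1 else n) else n - 1)" for n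
  define sign where "sign n = (if even n then (if n + 1 < m then 1 else 0) else -1 :: real)" for n
  have partner: "partner n < m" "partner (partner n) = n" "sign (partner n) = - sign n" if "n < m" for n
    using that unfolding partner_def sign_def by auto
  define \<sigma> where "\<sigma> i = d (partner (e i))" for i
  define s where "s i = sign (e i)" for i
  have "pairing \<sigma> s"
    unfolding pairing_def \<sigma>_def s_def using partner[OF e_lt] by (simp add: ed de sign_def)
  moreover have "s i = 0 \<longleftrightarrow> odd CARD('m) \<and> i = k0" for i
  proof -
    have "s i = 0 \<longleftrightarrow> e i = m - 1 \<and> odd m"
      unfolding s_def sign_def using e_lt[of i] \<open>m \<ge> 1\<close> by auto presburger+
    also have "\<dots> \<longleftrightarrow> i = k0 \<and> odd m"
      using e_k0 e by (metis bij_betw_imp_inj_on injD)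
    finally show ?thesis unfolding m_def by auto
  qed
  ultimately show ?thesis using that by blast
qed

lemma reflection_map_nth: "reflection_map x $ i = (if i = (SOME k. True) then - x$i else x$i)"
  unfolding reflection_map_def Let_def inner_axis by (simp add: axis_def)

lemma reflection_map_involutive: "reflection_map (reflection_map x) = x"
  by (simp add: vec_eq_iff reflection_map_nth)

lemma pair_rotation_pi_eq_reflection_map:
  assumes "pairing \<sigma> s" and "\<And>i. s i = 0 \<longleftrightarrow> i = (SOME k. True)"
  shows "pair_rotation \<sigma> s pi x = - reflection_map x"
  using pair_rotation_pi_int[OF assms(1), of 1] assms(2)
  by (simp add: vec_eq_iff reflection_map_nth)

lemma R_set_const_eq_sphere:
  fixes \<gamma> :: "real^'m"
  assumes const: "\<forall>k. \<gamma>$k = a" and pos: "\<delta> / a > 0"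
  shows "R_set \<gamma> \<delta> = sphere 0 (sqrt (\<delta> / a))"
proof -
  have "a \<noteq> 0" using pos by auto
  then have R: "u \<in> R_set \<gamma> \<delta> \<longleftrightarrow> (\<Sum>i\<in>UNIV. (u$i)^2) = \<delta> / a" for u
    using const by (auto simp: R_set_def field_simps sum_distrib_left[symmetric])
  moreover have S: "(\<Sum>i\<in>UNIV. (u$i)^2) = \<delta> / a \<longleftrightarrow> norm u = sqrt (\<delta> / a)" for u
    unfolding norm_eq_sqrt_sum_squares using pos by (auto simp: sum_nonneg)
  ultimately show ?thesis
    unfolding set_eq_iff mem_sphere dist_0_norm using R S by blast
qed

section \<open>The topological type of \<open>N\<close>\<close>

lemma cis_eq_cis_imp: "cis A = cis B \<Longrightarrow> \<exists>n::int. A = B + 2 * pi * of_int n"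
proof -
  assume "cis A = cis B"
  then have "cis (A - B) = 1" using cis_divide[of A B] by simp
  then have "cos (A - B) = 1" by (metis cis.sel(1) one_complex.sel(1))
  then obtain n :: int where "A - B = of_int n * 2 * pi" using cos_one_2pi_int by blast
  then show ?thesis by (intro exI[of _ n]) (simp add: algebra_simps)
qed

lemma sphere_times_circle_eq:
  "prod_topology (top_of_set (sphere (0::real^'m) 1)) (top_of_set (sphere (0::complex) 1))
     = top_of_set (sphere 0 1 \<times> sphere 0 1)"
  using subtopology_Times[of euclidean euclidean "sphere (0::real^'m) 1" "sphere (0::complex) 1"] by simp

text \<open>With every coordinate paired, \<open>-1 \<in> SO(m)\<close> lies on the circle \<open>\<theta> \<mapsto> pair_rotation \<sigma> s \<theta>\<close>,
  and \<open>untwist\<close> undoes the identification \<open>(u, \<phi>) \<sim> (-u, \<phi> + 1/(2a))\<close> by rotating back.\<close>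
definition untwist ::
    "('m \<Rightarrow> 'm) \<Rightarrow> ('m \<Rightarrow> real) \<Rightarrow> real \<Rightarrow> real \<Rightarrow> (real^'m) \<times> real \<Rightarrow> (real^'m) \<times> complex" where
  "untwist \<sigma> s a r = (\<lambda>(u, \<phi>). (pair_rotation \<sigma> s (2 * pi * a * \<phi>) ((1 / r) *\<^sub>R u), cis (4 * pi * a * \<phi>)))"

lemma N_rel_iff_untwist_eq:
  fixes \<gamma> :: "real^'m" and \<sigma> :: "'m \<Rightarrow> 'm"
  assumes const: "\<forall>k. \<gamma>$k = a" and a: "a \<noteq> 0" and r: "r \<noteq> 0"
    and P: "pairing \<sigma> s" and paired: "\<forall>i. s i \<noteq> 0"
  shows "N_rel \<gamma> (u, \<phi>) (u', \<phi>') \<longleftrightarrow> untwist \<sigma> s a r (u, \<phi>) = untwist \<sigma> s a r (u', \<phi>')"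
proof -
  let ?rot = "pair_rotation \<sigma> s"
  have sign: "(\<chi> i. if s i = 0 \<or> even j then y$i else - y$i) = (if even j then y else - y)"
    for j :: int and y
    using paired by (simp add: vec_eq_iff)
  have flip: "?rot (\<theta> + pi * of_int j) y = ?rot \<theta> (if even j then y else - y)" for \<theta> j y
    unfolding pair_rotation_add[OF P] pair_rotation_pi_int[OF P] sign ..
  have angle: "2 * pi * a * (\<phi> + of_int j / (2 * a)) = 2 * pi * a * \<phi> + pi * of_int j"
    and double_angle: "4 * pi * a * (\<phi> + of_int j / (2 * a)) = 4 * pi * a * \<phi> + 2 * pi * of_int j"
    for j :: int
    using a by (simp_all add: field_simps)
  show ?thesis
  proof
    assume "N_rel \<gamma> (u, \<phi>) (u', \<phi>')"
    then obtain j :: int where j: "\<phi>' = \<phi> + of_int j / (2 * a)" "u' = (if even j then u else - u)"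
      unfolding N_rel_const[OF const a] by blast
    have "cis (4 * pi * a * \<phi>') = cis (4 * pi * a * \<phi>)"
      unfolding j(1) double_angle by (simp add: cis_mult[symmetric])
    then show "untwist \<sigma> s a r (u, \<phi>) = untwist \<sigma> s a r (u', \<phi>')"
      unfolding j(1) using j(2)
      by (simp add: untwist_def angle flip pair_rotation_scaleR pair_rotation_uminus)
  next
    assume "untwist \<sigma> s a r (u, \<phi>) = untwist \<sigma> s a r (u', \<phi>')"
    then have rot: "?rot (2 * pi * a * \<phi>) ((1 / r) *\<^sub>R u) = ?rot (2 * pi * a * \<phi>') ((1 / r) *\<^sub>R u')"
      and "cis (4 * pi * a * \<phi>') = cis (4 * pi * a * \<phi>)"
      unfolding untwist_def by auto
    then obtain j :: int where "4 * pi * a * \<phi>' = 4 * pi * a * \<phi> + 2 * pi * of_int j"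
      using cis_eq_cis_imp by blast
    then have "pi * (2 * (2 * a * \<phi>')) = pi * (2 * (2 * a * \<phi> + of_int j))"
      by (simp add: algebra_simps)
    then have "2 * a * \<phi>' = 2 * a * \<phi> + of_int j" by simp
    then have j: "\<phi>' = \<phi> + of_int j / (2 * a)" using a by (simp add: field_simps)
    have "?rot (2 * pi * a * \<phi>) ((1 / r) *\<^sub>R u)
        = ?rot (2 * pi * a * \<phi>) ((1 / r) *\<^sub>R (if even j then u' else - u'))"
      using rot unfolding j angle flip by (simp add: pair_rotation_scaleR pair_rotation_uminus)
    then have "(1 / r) *\<^sub>R u = (1 / r) *\<^sub>R (if even j then u' else - u')"
      using pair_rotation_inverse[OF P] by metis
    then have "u' = (if even j then u else - u)" using r by auto
    then show "N_rel \<gamma> (u, \<phi>) (u', \<phi>')" unfolding N_rel_const[OF const a] using j by blast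
  qed
qed

lemma untwist_image:
  fixes \<sigma> :: "'m::finite \<Rightarrow> 'm"
  assumes P: "pairing \<sigma> s" and a: "a \<noteq> 0" and r: "r > 0"
  shows "untwist \<sigma> s a r ` (sphere 0 r \<times> UNIV) = sphere 0 1 \<times> sphere 0 1"
proof
  show "untwist \<sigma> s a r ` (sphere 0 r \<times> UNIV) \<subseteq> sphere 0 1 \<times> sphere 0 1"
    unfolding untwist_def using r by (auto simp: norm_pair_rotation[OF P])
  show "sphere 0 1 \<times> sphere 0 1 \<subseteq> untwist \<sigma> s a r ` (sphere 0 r \<times> UNIV)"
  proof clarify
    fix v :: "real^'m" and z :: complex
    assume "v \<in> sphere 0 1" "z \<in> sphere 0 1"
    then have v: "norm v = 1" and z: "norm z = 1" by auto
    then have "z \<noteq> 0" by auto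
    then have "cis (Arg z) = z" using z by (simp add: cis_Arg sgn_div_norm)
    define \<phi> where "\<phi> = Arg z / (4 * pi * a)"
    define u where "u = r *\<^sub>R pair_rotation \<sigma> s (- (2 * pi * a * \<phi>)) v"
    have "untwist \<sigma> s a r (u, \<phi>) = (v, z)"
      unfolding untwist_def u_def \<phi>_def using r a \<open>cis (Arg z) = z\<close>
      by (simp add: pair_rotation_scaleR pair_rotation_inverse[OF P, of "- _", simplified])
    moreover have "u \<in> sphere 0 r"
      unfolding u_def using r v by (simp add: norm_pair_rotation[OF P])
    ultimately show "(v, z) \<in> untwist \<sigma> s a r ` (sphere 0 r \<times> UNIV)"
      by (intro image_eqI[of _ _ "(u, \<phi>)"]) auto
  qed
qed

lemma N_top_homeomorphic_sphere_times_circle: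
  fixes \<gamma> :: "real^'m" and \<sigma> :: "'m \<Rightarrow> 'm"
  assumes const: "\<forall>k. \<gamma>$k = a" and pos: "\<delta> / a > 0"
    and P: "pairing \<sigma> s" and paired: "\<forall>i. s i \<noteq> 0"
  shows "N_top \<gamma> \<delta> homeomorphic_space
           prod_topology (top_of_set (sphere (0::real^'m) 1)) (top_of_set (sphere (0::complex) 1))"
proof -
  have a: "a \<noteq> 0" using pos by auto
  define r where "r = sqrt (\<delta> / a)"
  have r: "r > 0" unfolding r_def using pos by simp
  have R: "R_set \<gamma> \<delta> = sphere 0 r" unfolding r_def by (rule R_set_const_eq_sphere[OF const pos])
  have fibres: "fibre_relation (N_cover \<gamma> \<delta>) (untwist \<sigma> s a r) (N_rel \<gamma>)"
    unfolding fibre_relation_def using N_rel_iff_untwist_eq[OF const a _ P paired] r by auto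
  have "continuous_on (R_set \<gamma> \<delta> \<times> UNIV) (untwist \<sigma> s a r)"
    unfolding untwist_def split_beta by (intro continuous_intros)
  then have "continuous_map (N_cover \<gamma> \<delta>) (top_of_set (sphere 0 1 \<times> sphere 0 1)) (untwist \<sigma> s a r)"
    using untwist_image[OF P a r] unfolding R by auto
  then show ?thesis
    unfolding N_top_eq sphere_times_circle_eq
    using N_cover_fundamental_domain[OF const a, where \<delta> = \<delta>] untwist_image[OF P a r]
    by (intro quotient_homeomorphic_space[OF fibres compactin_N_cover[where c = "1 / \<bar>a\<bar>"]])
      (auto simp: R intro: Hausdorff_space_subtopology)
qed

definition mapping_torus_rel :: "('a \<Rightarrow> 'a) \<Rightarrow> ('a \<times> real) \<Rightarrow> ('a \<times> real) \<Rightarrow> bool" where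
  "mapping_torus_rel f = (\<lambda>(x, t) (y, s). (x, t) = (y, s) \<or> (t = 0 \<and> s = 1 \<and> y = f x) \<or> (t = 1 \<and> s = 0 \<and> x = f y))"

lemma klein_bottle_eq:
  "klein_bottle = quotient_topology (top_of_set (sphere 0 1 \<times> {0..1})) (mapping_torus_rel reflection_map)"
  unfolding klein_bottle_def mapping_torus_def mapping_torus_rel_def
  using subtopology_Times[of euclidean euclidean "sphere 0 1" "{0..1::real}"] by simp

text \<open>For odd \<open>m\<close> the circle \<open>pair_rotation \<sigma> s\<close> fixes one axis and reaches minus the reflection
  in it at half a turn, so \<open>sweep\<close>, which runs \<open>S\<^sup>m\<^sup>-\<^sup>1\<close> through half the circle, realises \<open>N\<close> as
  the mapping torus of that reflection.\<close>
definition sweep ::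
    "('m \<Rightarrow> 'm) \<Rightarrow> ('m \<Rightarrow> real) \<Rightarrow> real \<Rightarrow> real \<Rightarrow> (real^'m) \<times> real \<Rightarrow> (real^'m) \<times> real" where
  "sweep \<sigma> s a r = (\<lambda>(x, t). (r *\<^sub>R pair_rotation \<sigma> s (pi * t) x, t / (2 * a)))"

lemma half_turn_iff_mapping_torus_rel:
  fixes \<sigma> :: "'m::finite \<Rightarrow> 'm"
  assumes P: "pairing \<sigma> s" and unpaired: "\<And>i. s i = 0 \<longleftrightarrow> i = (SOME k. True)"
    and t: "t \<in> {0..1}" and t': "t' \<in> {0..1}"
  shows "(\<exists>j::int. t' = t + of_int j \<and>
            pair_rotation \<sigma> s (pi * t') y = (if even j then pair_rotation \<sigma> s (pi * t) x else - pair_rotation \<sigma> s (pi * t) x))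
         \<longleftrightarrow> mapping_torus_rel reflection_map (x, t) (y, t')"
proof -
  let ?rot = "pair_rotation \<sigma> s"
  have half_turn: "?rot pi z = - reflection_map z" for z
    by (rule pair_rotation_pi_eq_reflection_map[OF P unpaired])
  show ?thesis
  proof
    assume "\<exists>j::int. t' = t + of_int j \<and> ?rot (pi * t') y = (if even j then ?rot (pi * t) x else - ?rot (pi * t) x)"
    then obtain j :: int where j: "t' = t + of_int j"
      and rot: "?rot (pi * t') y = (if even j then ?rot (pi * t) x else - ?rot (pi * t) x)"
      by blast
    have "j = 0 \<or> (j = 1 \<and> t = 0 \<and> t' = 1) \<or> (j = -1 \<and> t = 1 \<and> t' = 0)"
      using j t t' by auto
    then show "mapping_torus_rel reflection_map (x, t) (y, t')"
    proof (elim disjE conjE)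
      assume "j = 0"
      then have "?rot (pi * t) y = ?rot (pi * t) x" using rot j by simp
      then have "y = x" by (metis pair_rotation_inverse[OF P])
      then show ?thesis using \<open>j = 0\<close> j by (simp add: mapping_torus_rel_def)
    next
      assume "j = 1" "t = 0" "t' = 1"
      then have "reflection_map y = x"
        using rot by (simp add: half_turn pair_rotation_zero[OF P])
      then have "y = reflection_map x" by (metis reflection_map_involutive)
      then show ?thesis using \<open>t = 0\<close> \<open>t' = 1\<close> by (simp add: mapping_torus_rel_def)
    next
      assume "j = -1" "t = 1" "t' = 0"
      then have "y = reflection_map x"
        using rot by (simp add: half_turn pair_rotation_zero[OF P])
      then have "x = reflection_map y" by (metis reflection_map_involutive)
      then show ?thesis using \<open>t = 1\<close> \<open>t' = 0\<close> by (simp add: mapping_torus_rel_def)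
    qed
  next
    assume "mapping_torus_rel reflection_map (x, t) (y, t')"
    then consider "y = x" "t' = t" | "t = 0" "t' = 1" "y = reflection_map x"
      | "t = 1" "t' = 0" "x = reflection_map y"
      unfolding mapping_torus_rel_def by auto
    then show "\<exists>j::int. t' = t + of_int j \<and> ?rot (pi * t') y = (if even j then ?rot (pi * t) x else - ?rot (pi * t) x)"
    proof cases
      case 1 then show ?thesis by (intro exI[of _ 0]) simp
    next
      case 2 then show ?thesis
        by (intro exI[of _ 1]) (simp add: half_turn pair_rotation_zero[OF P] reflection_map_involutive)
    next
      case 3 then show ?thesis
        by (intro exI[of _ "-1"]) (simp add: half_turn pair_rotation_zero[OF P] reflection_map_involutive)
    qed
  qed
qed

lemma N_rel_sweep_iff_mapping_torus_rel:
  fixes \<gamma> :: "real^'m" and \<sigma> :: "'m \<Rightarrow> 'm"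
  assumes const: "\<forall>k. \<gamma>$k = a" and a: "a \<noteq> 0" and r: "r \<noteq> 0"
    and P: "pairing \<sigma> s" and unpaired: "\<And>i. s i = 0 \<longleftrightarrow> i = (SOME k. True)"
    and t: "t \<in> {0..1}" and t': "t' \<in> {0..1}"
  shows "N_rel \<gamma> (sweep \<sigma> s a r (x, t)) (sweep \<sigma> s a r (y, t'))
         \<longleftrightarrow> mapping_torus_rel reflection_map (x, t) (y, t')"
proof -
  let ?rot = "pair_rotation \<sigma> s"
  have "N_rel \<gamma> (sweep \<sigma> s a r (x, t)) (sweep \<sigma> s a r (y, t'))
      \<longleftrightarrow> (\<exists>j::int. t' = t + of_int j \<and> ?rot (pi * t') y = (if even j then ?rot (pi * t) x else - ?rot (pi * t) x))"
    unfolding sweep_def prod.case N_rel_const[OF const a] using a r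
    by (auto simp: add_divide_distrib[symmetric] divide_cancel_right scaleR_cancel_left
        simp flip: scaleR_minus_right)
  also have "\<dots> \<longleftrightarrow> mapping_torus_rel reflection_map (x, t) (y, t')"
    by (rule half_turn_iff_mapping_torus_rel[OF P unpaired t t'])
  finally show ?thesis .
qed

lemma sweep_reaches_N_classes:
  fixes \<gamma> :: "real^'m" and \<sigma> :: "'m \<Rightarrow> 'm"
  assumes const: "\<forall>k. \<gamma>$k = a" and a: "a \<noteq> 0" and r: "r > 0"
    and P: "pairing \<sigma> s" and u: "norm u = r"
  shows "\<exists>p \<in> sphere 0 1 \<times> {0..1}. N_rel \<gamma> (sweep \<sigma> s a r p) (u, \<phi>)"
proof -
  define j where "j = \<lfloor>2 * a * \<phi>\<rfloor>"
  define t where "t = 2 * a * \<phi> - of_int j"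
  define u' where "u' = (if even j then u else - u)"
  define x where "x = pair_rotation \<sigma> s (- (pi * t)) ((1 / r) *\<^sub>R u')"
  have "(x, t) \<in> sphere 0 1 \<times> {0..1}"
    unfolding x_def t_def j_def using u r
    by (auto simp: u'_def norm_pair_rotation[OF P]) linarith+
  moreover have "sweep \<sigma> s a r (x, t) = (u', t / (2 * a))"
    unfolding sweep_def x_def using r
    by (simp add: pair_rotation_scaleR pair_rotation_inverse[OF P, of "- _", simplified])
  moreover have "N_rel \<gamma> (u', t / (2 * a)) (u, \<phi>)"
    unfolding N_rel_const[OF const a] u'_def t_def using a
    by (intro exI[of _ j]) (auto simp: field_simps)
  ultimately show ?thesis by (intro bexI[of _ "(x, t)"]) simp_all
qed

lemma N_top_homeomorphic_klein_bottle:
  fixes \<gamma> :: "real^'m" and \<sigma> :: "'m \<Rightarrow> 'm"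
  assumes const: "\<forall>k. \<gamma>$k = a" and pos: "\<delta> / a > 0"
    and P: "pairing \<sigma> s" and unpaired: "\<And>i. s i = 0 \<longleftrightarrow> i = (SOME k. True)"
  shows "N_top \<gamma> \<delta> homeomorphic_space (klein_bottle :: ((real^'m) \<times> real) set topology)"
proof -
  have a: "a \<noteq> 0" and nondeg: "\<delta> \<noteq> 0" using pos by auto
  define r where "r = sqrt (\<delta> / a)"
  have r: "r > 0" unfolding r_def using pos by simp
  have R: "R_set \<gamma> \<delta> = sphere 0 r" unfolding r_def by (rule R_set_const_eq_sphere[OF const pos])
  define K :: "((real^'m) \<times> real) set" where "K = sphere 0 1 \<times> {0..1}"
  define torus where "torus = (\<lambda>(u, \<phi>). torus_act \<gamma> \<phi> u)"
  define h where "h = torus \<circ> sweep \<sigma> s a r"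
  have sweep_K: "sweep \<sigma> s a r p \<in> R_set \<gamma> \<delta> \<times> UNIV" if "p \<in> K" for p
    using that r unfolding K_def sweep_def R by (auto simp: norm_pair_rotation[OF P])
  have fibres: "fibre_relation (top_of_set K) h (mapping_torus_rel reflection_map)"
    unfolding fibre_relation_def
  proof (intro ballI)
    fix p q assume "p \<in> topspace (top_of_set K)" "q \<in> topspace (top_of_set K)"
    then have "p \<in> K" "q \<in> K" by simp_all
    moreover obtain x t y t' where pq: "p = (x, t)" "q = (y, t')" by fastforce
    ultimately have tt': "t \<in> {0..1}" "t' \<in> {0..1}" unfolding K_def by auto
    have "fibre_relation (N_cover \<gamma> \<delta>) torus (N_rel \<gamma>)"
      unfolding torus_def by (rule fibre_relation_N_rel_const[OF const a nondeg])
    then have "h p = h q \<longleftrightarrow> N_rel \<gamma> (sweep \<sigma> s a r p) (sweep \<sigma> s a r q)"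
      using sweep_K[OF \<open>p \<in> K\<close>] sweep_K[OF \<open>q \<in> K\<close>] unfolding h_def
      by (simp add: fibre_relationD)
    also have "\<dots> \<longleftrightarrow> mapping_torus_rel reflection_map p q"
      unfolding pq using r by (intro N_rel_sweep_iff_mapping_torus_rel[OF const a _ P unpaired tt']) auto
    finally show "mapping_torus_rel reflection_map p q \<longleftrightarrow> h p = h q" by blast
  qed
  have onto: "h ` K = torus ` (R_set \<gamma> \<delta> \<times> UNIV)"
  proof
    show "h ` K \<subseteq> torus ` (R_set \<gamma> \<delta> \<times> UNIV)"
      unfolding h_def using sweep_K by auto
    show "torus ` (R_set \<gamma> \<delta> \<times> UNIV) \<subseteq> h ` K"
    proof clarify
      fix u \<phi> assume "u \<in> R_set \<gamma> \<delta>"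
      then have "norm u = r" unfolding R by simp
      then obtain p where "p \<in> K" "N_rel \<gamma> (sweep \<sigma> s a r p) (u, \<phi>)"
        using sweep_reaches_N_classes[OF const a r P, of u \<phi>] unfolding K_def by blast
      then show "torus (u, \<phi>) \<in> h ` K"
        unfolding h_def torus_def using torus_act_N_rel
        by (metis (mono_tags, lifting) comp_apply image_eqI prod.collapse split_conv)
    qed
  qed
  have "continuous_map (top_of_set K) euclidean h"
    unfolding h_def torus_def sweep_def continuous_map_iff_continuous torus_act_def split_beta o_def
    using a by (intro continuous_intros) auto
  then have "quotient_topology (top_of_set K) (mapping_torus_rel reflection_map) homeomorphic_space
      subtopology euclidean (h ` topspace (top_of_set K))"
  proof (rule quotient_homeomorphic_space_image[OF fibres, rotated 2])
    show "compactin (top_of_set K) K"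
      unfolding K_def by (simp add: compactin_subtopology compact_Times)
    show "\<exists>q\<in>K. mapping_torus_rel reflection_map q p" if "p \<in> topspace (top_of_set K)" for p
      using that fibres unfolding fibre_relation_def by auto
  qed (rule Hausdorff_space_euclidean)
  then have "(klein_bottle :: ((real^'m) \<times> real) set topology) homeomorphic_space
      subtopology euclidean (torus ` (R_set \<gamma> \<delta> \<times> UNIV))"
    unfolding klein_bottle_eq K_def[symmetric] onto[symmetric] by simp
  moreover have "N_top \<gamma> \<delta> homeomorphic_space subtopology euclidean (torus ` (R_set \<gamma> \<delta> \<times> UNIV))"
    unfolding torus_def by (rule N_top_homeomorphic_torus_image[OF const a nondeg]) (simp add: R)
  ultimately show ?thesis
    using homeomorphic_space_sym homeomorphic_space_trans by blast
qed

theorem proposition12p8: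
  fixes \<gamma> :: "real^'m" and \<delta> :: real
  assumes cone: "\<exists>c::'m \<Rightarrow> real. (\<forall>k. c k \<ge> 0) \<and> \<delta> = (\<Sum>k\<in>UNIV. c k * \<gamma>$k)"
    and nondeg: "\<delta> \<noteq> 0"
    and lattice: "\<exists>g. g \<noteq> 0 \<and> gen_lattice \<gamma> = range (\<lambda>j::int. of_int j * g)"
    and cpt: "compact (R_set \<gamma> \<delta>)"
  shows "(embedding_map (N_top \<gamma> \<delta>) (euclidean :: (complex^'m) topology) (N_imm \<gamma>)
            \<longleftrightarrow> (\<forall>k l. \<gamma>$k = \<gamma>$l))
       \<and> ((\<forall>k l. \<gamma>$k = \<gamma>$l) \<longrightarrow>
            (if even CARD('m)
             then N_top \<gamma> \<delta> homeomorphic_space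
                    prod_topology (top_of_set (sphere (0::real^'m) 1)) (top_of_set (sphere (0::complex) 1))
             else N_top \<gamma> \<delta> homeomorphic_space (klein_bottle :: ((real^'m) \<times> real) set topology)))"
proof -
  have pos: "\<gamma>$k * \<delta> > 0" for k by (rule coeff_mult_delta_pos[OF cone nondeg cpt])
  show ?thesis
  proof (cases "\<forall>k l. \<gamma>$k = \<gamma>$l")
    case False
    obtain g where g: "gen_lattice \<gamma> = range (\<lambda>j::int. of_int j * g)" using lattice by blast
    obtain k n where "\<gamma>$k = of_int n * g" "\<bar>n\<bar> \<ge> 2"
      using nonconstant_coeff_large_multiple[OF g pos False] .
    then have "\<not> inj_on (N_imm \<gamma>) (topspace (N_top \<gamma> \<delta>))"
      using N_imm_not_inj_on[OF g _ _ pos] by blast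
    then show ?thesis
      using False embedding_map_def homeomorphic_imp_injective_map by metis
  next
    case True
    define a where "a = \<gamma>$(SOME k. True)"
    have const: "\<forall>k. \<gamma>$k = a" unfolding a_def using True by blast
    have "\<delta> / a > 0" using pos[of "SOME k. True"] by (auto simp: a_def zero_less_divide_iff zero_less_mult_iff)
    moreover obtain \<sigma> and s :: "'m \<Rightarrow> real"
      where P: "pairing \<sigma> s" and unpaired: "\<And>i. s i = 0 \<longleftrightarrow> odd CARD('m) \<and> i = (SOME k. True)"
      using pairing_exists by blast
    ultimately have "if even CARD('m)
        then N_top \<gamma> \<delta> homeomorphic_space
               prod_topology (top_of_set (sphere (0::real^'m) 1)) (top_of_set (sphere (0::complex) 1))
        else N_top \<gamma> \<delta> homeomorphic_space (klein_bottle :: ((real^'m) \<times> real) set topology)"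
      using N_top_homeomorphic_sphere_times_circle[OF const _ P] N_top_homeomorphic_klein_bottle[OF const _ P]
      by (simp add: unpaired)
    moreover have "a \<noteq> 0" using pos[of "SOME k. True"] a_def by auto
    ultimately show ?thesis
      using True embedding_map_N_imm_const[OF const _ nondeg cpt] by simp
  qed
qed

end
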